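(* Let Assumption A hold with (H2), let $T>0$ and let $(\varphi,\psi)$ solve the Schrödinger system. Then $\kappa_\psi(r)\ge\alpha_\nu-\frac1T-r^{-1}f_L(r)$ for all $r>0$.
   Context: $\kappa_U(r)=\inf\{|x-y|^{-2}\langle\nabla U(x)-\nabla U(y),x-y\rangle:|x-y|=r\}$, $r>0$. $f_L(r)=2L^{1/2}\tanh(rL^{1/2}/2)$. $P_tg(x)=(2\pi t)^{-d/2}\int g(y)e^{-|y-x|^2/(2t)}\mathrm{d}y$. Assumption A with (H2): $\mu(\mathrm{d}x)=e^{-U^\mu}\mathrm{d}x$, $\nu(\mathrm{d}y)=e^{-U^\nu}\mathrm{d}y$ probability measures on $\mathbb{R}^d$, $U^\mu,U^\nu\in C^2$; $\mu$ has finite second moment and finite entropy w.r.t. Lebesgue; $\langle v,\nabla^2U^\mu(x)v\rangle\le\beta_\mu|v|^2$ for all $x,v$, some $\beta_\mu>0$; there exist $\alpha_\nu>0,L>0$ with $\kappa_{U^\nu}(r)\ge\alpha_\nu-r^{-1}f_L(r)$ for all $r>0$. Schrödinger system: $\varphi=U^\mu+\log P_Te^{-\psi}$, $\psi=U^\nu+\log P_Te^{-\varphi}$. *)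

theory Defs
  imports "HOL-Analysis.Analysis"
begin

definition C2 :: "('a::euclidean_space \<Rightarrow> real) \<Rightarrow> bool" where
  "C2 U \<longleftrightarrow> (\<exists>(DU :: 'a \<Rightarrow> ('a \<Rightarrow>\<^sub>L real)) (D2U :: 'a \<Rightarrow> ('a \<Rightarrow>\<^sub>L ('a \<Rightarrow>\<^sub>L real))).
      (\<forall>x. (U has_derivative blinfun_apply (DU x)) (at x)) \<and>
      (\<forall>x. (DU has_derivative blinfun_apply (D2U x)) (at x)) \<and>
      continuous_on UNIV D2U)"

definition hessian_upper_bound :: "('a::euclidean_space \<Rightarrow> real) \<Rightarrow> real \<Rightarrow> bool" where
  "hessian_upper_bound U \<beta> \<longleftrightarrow>
     (\<forall>(DU :: 'a \<Rightarrow> ('a \<Rightarrow>\<^sub>L real)) (D2U :: 'a \<Rightarrow> ('a \<Rightarrow>\<^sub>L ('a \<Rightarrow>\<^sub>L real))).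
      (\<forall>x. (U has_derivative blinfun_apply (DU x)) (at x)) \<longrightarrow>
      (\<forall>x. (DU has_derivative blinfun_apply (D2U x)) (at x)) \<longrightarrow>
      (\<forall>x v. blinfun_apply (blinfun_apply (D2U x) v) v \<le> \<beta> * (norm v)\<^sup>2))"

text \<open>kappa_U(r) = inf { |x-y|^-2 <grad U(x) - grad U(y), x-y> : |x-y| = r },
  with <grad U(x), h> written as the Frechet derivative of U at x applied to h.
  The infimum is taken in the extended reals.\<close>
definition kappa :: "('a::euclidean_space \<Rightarrow> real) \<Rightarrow> real \<Rightarrow> ereal" where
  "kappa U r = (INF p \<in> {(x, y). norm (x - y) = r}.
      ereal ((frechet_derivative U (at (fst p)) (fst p - snd p)
              - frechet_derivative U (at (snd p)) (fst p - snd p))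
             / (norm (fst p - snd p))\<^sup>2))"

definition fL :: "real \<Rightarrow> real \<Rightarrow> real" where
  "fL L r = 2 * sqrt L * tanh (r * sqrt L / 2)"

definition heat :: "real \<Rightarrow> ('a::euclidean_space \<Rightarrow> real) \<Rightarrow> 'a \<Rightarrow> real" where
  "heat t g x = (2 * pi * t) powr (- (real DIM('a) / 2)) *
      (\<integral>y. g y * exp (- (norm (y - x))\<^sup>2 / (2 * t)) \<partial>lborel)"

definition schroedinger_solution ::
  "real \<Rightarrow> ('a::euclidean_space \<Rightarrow> real) \<Rightarrow> ('a \<Rightarrow> real) \<Rightarrow> ('a \<Rightarrow> real) \<Rightarrow> ('a \<Rightarrow> real) \<Rightarrow> bool" where
  "schroedinger_solution T U\<mu> U\<nu> \<phi> \<psi> \<longleftrightarrow>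
     (\<forall>x. integrable lborel (\<lambda>y. exp (- \<psi> y) * exp (- (norm (y - x))\<^sup>2 / (2 * T)))) \<and>
     (\<forall>x. integrable lborel (\<lambda>y. exp (- \<phi> y) * exp (- (norm (y - x))\<^sup>2 / (2 * T)))) \<and>
     (\<forall>x. \<phi> x = U\<mu> x + ln (heat T (\<lambda>y. exp (- \<psi> y)) x)) \<and>
     (\<forall>x. \<psi> x = U\<nu> x + ln (heat T (\<lambda>y. exp (- \<phi> y)) x))"

end

theory Submission
  imports Defs
begin

text \<open>Expanding the Gaussian kernel, \<open>P\<^sub>T (exp \<circ> -\<phi>) x\<close> is \<open>exp (- |x|\<^sup>2 / (2 T))\<close> times a
  constant times the Laplace transform of \<open>y \<mapsto> exp (- \<phi> y - |y|\<^sup>2 / (2 T))\<close> at \<open>x / T\<close>.  So \<open>\<psi>\<close> is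
  \<open>U\<^sup>\<nu> - |x|\<^sup>2 / (2 T)\<close> plus a log-Laplace transform, up to a constant.  A log-Laplace transform is
  convex, so its gradient is monotone and only raises \<open>\<kappa>\<close>, while the quadratic term lowers \<open>\<kappa>\<close>
  by exactly \<open>1 / T\<close>.\<close>

lemma exp_remainder_le: "\<bar>exp t - 1 - t\<bar> \<le> t\<^sup>2 * exp \<bar>t::real\<bar>"
proof -
  have lower: "exp t - 1 - t \<ge> 0" using exp_ge_add_one_self[of t] by linarith
  have "exp t * (1 - t) \<le> exp t * exp (- t)"
    using exp_ge_add_one_self[of "- t"] by (intro mult_left_mono) auto
  hence upper: "exp t - 1 - t \<le> t * (exp t - 1)" by (simp add: exp_minus algebra_simps)
  have "t * (exp t - 1) \<le> t\<^sup>2 * exp \<bar>t\<bar>"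
  proof (cases "t \<ge> 0")
    case True
    have "exp t - 1 \<le> t * exp t" using upper by (simp add: algebra_simps)
    hence "t * (exp t - 1) \<le> t * (t * exp t)" using True by (intro mult_left_mono) auto
    then show ?thesis using True by (simp add: power2_eq_square)
  next
    case False
    have "1 - exp t \<le> - t" using exp_ge_add_one_self[of t] by linarith
    have "t * (exp t - 1) = (- t) * (1 - exp t)" by (simp add: algebra_simps)
    also have "\<dots> \<le> (- t) * (- t)"
      using \<open>1 - exp t \<le> - t\<close> False by (intro mult_left_mono) auto
    also have "\<dots> \<le> t\<^sup>2 * exp \<bar>t\<bar>"
      using mult_left_mono[of 1 "exp \<bar>t\<bar>" "t\<^sup>2"] by (simp add: power2_eq_square)
    finally show ?thesis .
  qed
  with lower upper show ?thesis by simp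
qed

lemma square_le_4_exp: "(t::real) \<ge> 0 \<Longrightarrow> t\<^sup>2 \<le> 4 * exp t"
proof -
  assume t: "t \<ge> 0"
  have "t / 2 \<le> exp (t / 2)" using exp_ge_add_one_self[of "t / 2"] by linarith
  hence "(t / 2)\<^sup>2 \<le> (exp (t / 2))\<^sup>2" using t by (intro power_mono) auto
  also have "(exp (t / 2))\<^sup>2 = exp t" by (simp add: power2_eq_square exp_add[symmetric])
  finally show ?thesis by (simp add: power_divide)
qed

lemma exp_inner_remainder_le:
  fixes v y :: "'a::real_inner"
  assumes "norm v \<le> 1"
  shows "\<bar>exp (v \<bullet> y) - 1 - v \<bullet> y\<bar> \<le> (norm v)\<^sup>2 * (4 * exp (2 * norm y))"
proof -
  have cs: "\<bar>v \<bullet> y\<bar> \<le> norm v * norm y" by (rule Cauchy_Schwarz_ineq2)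
  have "norm v * norm y \<le> norm y"
    by (rule mult_left_le_one_le) (use assms in auto)
  with cs have exp_le: "exp \<bar>v \<bullet> y\<bar> \<le> exp (norm y)" by simp
  have sq_le: "(v \<bullet> y)\<^sup>2 \<le> (norm v * norm y)\<^sup>2"
    using power_mono[OF cs, of 2] by simp
  have "\<bar>exp (v \<bullet> y) - 1 - v \<bullet> y\<bar> \<le> (v \<bullet> y)\<^sup>2 * exp \<bar>v \<bullet> y\<bar>"
    by (rule exp_remainder_le)
  also have "\<dots> \<le> (norm v * norm y)\<^sup>2 * exp (norm y)"
    by (rule mult_mono[OF sq_le exp_le]) simp_all
  also have "\<dots> = (norm v)\<^sup>2 * ((norm y)\<^sup>2 * exp (norm y))"
    by (simp only: power_mult_distrib mult.assoc)
  also have "\<dots> \<le> (norm v)\<^sup>2 * (4 * exp (norm y) * exp (norm y))"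
    by (rule mult_left_mono[OF mult_right_mono[OF square_le_4_exp]]) simp_all
  also have "\<dots> = (norm v)\<^sup>2 * (4 * exp (2 * norm y))"
    by (simp only: mult_2 exp_add mult.assoc)
  finally show ?thesis .
qed

lemma exists_Basis_norm_le_DIM_inner:
  fixes y :: "'a::euclidean_space"
  obtains b where "b \<in> Basis" "norm y \<le> real DIM('a) * \<bar>y \<bullet> b\<bar>"
proof -
  have "\<exists>b\<in>Basis. norm y \<le> real DIM('a) * \<bar>y \<bullet> b\<bar>"
  proof (rule ccontr)
    assume "\<not> ?thesis"
    hence "(\<Sum>b\<in>Basis. real DIM('a) * \<bar>y \<bullet> b\<bar>) < (\<Sum>b\<in>(Basis::'a set). norm y)"
      by (intro sum_strict_mono) auto
    hence "real DIM('a) * (\<Sum>b\<in>Basis. \<bar>y \<bullet> b\<bar>) < real DIM('a) * norm y"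
      by (simp add: sum_distrib_left)
    hence "(\<Sum>b\<in>Basis. \<bar>y \<bullet> b\<bar>) < norm y" by simp
    with norm_le_l1[of y] show False by simp
  qed
  with that show ?thesis by blast
qed

lemma exp_mult_norm_le_sum_exp_inner:
  fixes y :: "'a::euclidean_space"
  assumes "c \<ge> 0"
  defines "C \<equiv> c * real DIM('a)"
  shows "exp (c * norm y) \<le> (\<Sum>b\<in>Basis. exp ((C *\<^sub>R b) \<bullet> y) + exp ((- C *\<^sub>R b) \<bullet> y))"
proof -
  obtain b where b: "b \<in> Basis" "norm y \<le> real DIM('a) * \<bar>y \<bullet> b\<bar>"
    using exists_Basis_norm_le_DIM_inner by blast
  have "exp (c * norm y) \<le> exp (C * \<bar>y \<bullet> b\<bar>)"
    using b assms by (simp add: C_def mult.assoc mult_left_mono)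
  also have "\<dots> \<le> exp ((C *\<^sub>R b) \<bullet> y) + exp ((- C *\<^sub>R b) \<bullet> y)"
    by (cases "y \<bullet> b \<ge> 0") (auto simp: abs_if inner_commute add_increasing add_increasing2)
  also have "\<dots> \<le> (\<Sum>b\<in>Basis. exp ((C *\<^sub>R b) \<bullet> y) + exp ((- C *\<^sub>R b) \<bullet> y))"
    by (rule member_le_sum) (use b in auto)
  finally show ?thesis .
qed

locale laplace_transform =
  fixes g :: "'a::euclidean_space \<Rightarrow> real"
  assumes measurable: "g \<in> borel_measurable lborel"
    and pos: "\<And>y. g y > 0"
    and integrable_exp_inner: "\<And>w. integrable lborel (\<lambda>y. g y * exp (w \<bullet> y))"
begin

definition laplace :: "'a \<Rightarrow> real" where
  "laplace w = (\<integral>y. g y * exp (w \<bullet> y) \<partial>lborel)"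

definition laplace_moment :: "'a \<Rightarrow> 'a" where
  "laplace_moment w = (\<integral>y. (g y * exp (w \<bullet> y)) *\<^sub>R y \<partial>lborel)"

lemma integrable_exp_mult_norm:
  assumes c: "c \<ge> 0"
  shows "integrable lborel (\<lambda>y. g y * exp (a \<bullet> y) * exp (c * norm y))"
proof -
  define C where "C = c * real DIM('a)"
  let ?bound = "\<lambda>y. \<Sum>b\<in>Basis. g y * exp ((a + C *\<^sub>R b) \<bullet> y) + g y * exp ((a + - C *\<^sub>R b) \<bullet> y)"
  have "integrable lborel ?bound"
    by (intro Bochner_Integration.integrable_sum Bochner_Integration.integrable_add integrable_exp_inner)
  then show ?thesis
  proof (rule Bochner_Integration.integrable_bound)
    show "(\<lambda>y. g y * exp (a \<bullet> y) * exp (c * norm y)) \<in> borel_measurable lborel"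
      using measurable by measurable
    show "AE y in lborel. norm (g y * exp (a \<bullet> y) * exp (c * norm y)) \<le> norm (?bound y)"
    proof (intro AE_I2)
      fix y
      have "?bound y = g y * exp (a \<bullet> y) *
          (\<Sum>b\<in>Basis. exp ((C *\<^sub>R b) \<bullet> y) + exp ((- C *\<^sub>R b) \<bullet> y))"
        by (simp add: sum_distrib_left inner_add_left exp_add exp_diff exp_minus divide_inverse algebra_simps)
      moreover have "g y * exp (a \<bullet> y) * exp (c * norm y) \<le> \<dots>"
        using exp_mult_norm_le_sum_exp_inner[OF c, of y] pos[of y]
        by (intro mult_left_mono) (auto simp: C_def)
      ultimately have "g y * exp (a \<bullet> y) * exp (c * norm y) \<le> ?bound y" by simp
      then show "norm (g y * exp (a \<bullet> y) * exp (c * norm y)) \<le> norm (?bound y)"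
        using pos[of y] by (simp add: order_trans[OF _ abs_ge_self])
    qed
  qed
qed

lemma integrable_moment: "integrable lborel (\<lambda>y. (g y * exp (a \<bullet> y)) *\<^sub>R y)"
proof (rule Bochner_Integration.integrable_bound[OF integrable_exp_mult_norm[of 1 a]])
  show "(\<lambda>y. (g y * exp (a \<bullet> y)) *\<^sub>R y) \<in> borel_measurable lborel"
    using measurable by measurable
  show "AE y in lborel. norm ((g y * exp (a \<bullet> y)) *\<^sub>R y) \<le> norm (g y * exp (a \<bullet> y) * exp (1 * norm y))"
  proof (intro AE_I2)
    fix y :: 'a
    have "norm y \<le> exp (norm y)" using exp_ge_add_one_self[of "norm y"] by linarith
    hence "g y * exp (a \<bullet> y) * norm y \<le> g y * exp (a \<bullet> y) * exp (norm y)"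
      using pos[of y] by (intro mult_left_mono) auto
    thus "norm ((g y * exp (a \<bullet> y)) *\<^sub>R y) \<le> norm (g y * exp (a \<bullet> y) * exp (1 * norm y))"
      using pos[of y] by (simp add: abs_mult)
  qed
qed simp

lemma integrable_inner_moment: "integrable lborel (\<lambda>y. g y * exp (a \<bullet> y) * (v \<bullet> y))"
  using integrable_inner_right[OF integrable_moment, of v]
  by (simp add: inner_scaleR_right mult.commute)

lemma integral_inner_moment:
  "(\<integral>y. g y * exp (a \<bullet> y) * (v \<bullet> y) \<partial>lborel) = v \<bullet> laplace_moment a"
proof -
  have "(\<integral>y. g y * exp (a \<bullet> y) * (v \<bullet> y) \<partial>lborel) = (\<integral>y. v \<bullet> ((g y * exp (a \<bullet> y)) *\<^sub>R y) \<partial>lborel)"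
    by (simp add: mult.commute)
  also have "\<dots> = v \<bullet> laplace_moment a"
    unfolding laplace_moment_def by (rule integral_inner_right[OF integrable_moment])
  finally show ?thesis .
qed

lemma laplace_pos: "laplace w > 0"
proof -
  have "laplace w \<ge> 0"
    unfolding laplace_def using pos by (intro integral_nonneg_AE AE_I2) (simp add: less_imp_le)
  moreover have "laplace w \<noteq> 0"
  proof
    assume "laplace w = 0"
    hence "AE y in lborel. g y * exp (w \<bullet> y) = 0"
      unfolding laplace_def using pos integrable_exp_inner
      by (subst (asm) integral_nonneg_eq_0_iff_AE) (auto intro!: AE_I2 simp: less_imp_le)
    hence "AE y::'a in lborel. False"
      by (rule eventually_mono) (use pos in \<open>auto simp: less_le\<close>)
    thus False by (simp add: eventually_False ae_filter_eq_bot_iff)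
  qed
  ultimately show ?thesis by simp
qed

lemma laplace_taylor_le:
  assumes v: "norm v \<le> 1"
  shows "\<bar>laplace (a + v) - laplace a - v \<bullet> laplace_moment a\<bar>
    \<le> (norm v)\<^sup>2 * (\<integral>y. g y * exp (a \<bullet> y) * (4 * exp (2 * norm y)) \<partial>lborel)"
proof -
  let ?w = "\<lambda>y. g y * exp (a \<bullet> y)"
  have int_shift: "integrable lborel (\<lambda>y. ?w y * exp (v \<bullet> y))"
    using integrable_exp_inner[of "a + v"] by (simp add: inner_add_left exp_add mult.assoc)
  have int_diff: "integrable lborel (\<lambda>y. ?w y * exp (v \<bullet> y) - ?w y)"
    by (intro Bochner_Integration.integrable_diff int_shift integrable_exp_inner)
  have "laplace (a + v) - laplace a - v \<bullet> laplace_moment a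
      = (\<integral>y. ?w y * exp (v \<bullet> y) - ?w y - ?w y * (v \<bullet> y) \<partial>lborel)"
    unfolding Bochner_Integration.integral_diff[OF int_diff integrable_inner_moment]
      Bochner_Integration.integral_diff[OF int_shift integrable_exp_inner]
      integral_inner_moment[symmetric]
    by (simp add: laplace_def inner_add_left exp_add mult.assoc)
  also have "\<dots> = (\<integral>y. ?w y * (exp (v \<bullet> y) - 1 - v \<bullet> y) \<partial>lborel)"
    by (simp add: algebra_simps)
  finally have eq: "laplace (a + v) - laplace a - v \<bullet> laplace_moment a = \<dots>" .
  have "integrable lborel (\<lambda>y. ?w y * exp (v \<bullet> y) - ?w y - ?w y * (v \<bullet> y))"
    by (intro Bochner_Integration.integrable_diff int_diff integrable_inner_moment)
  hence int_rem: "integrable lborel (\<lambda>y. ?w y * (exp (v \<bullet> y) - 1 - v \<bullet> y))"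
    by (simp add: algebra_simps)
  have int_bound: "integrable lborel (\<lambda>y. (norm v)\<^sup>2 * (?w y * (4 * exp (2 * norm y))))"
    using integrable_mult_right[OF integrable_exp_mult_norm[of 2 a], of "4 * (norm v)\<^sup>2"]
    by (simp add: ac_simps)
  have "\<bar>?w y * (exp (v \<bullet> y) - 1 - v \<bullet> y)\<bar> \<le> (norm v)\<^sup>2 * (?w y * (4 * exp (2 * norm y)))" for y
    using mult_left_mono[OF exp_inner_remainder_le[OF v, of y], of "?w y"] pos[of y]
    by (simp add: abs_mult mult.left_commute)
  hence "\<bar>\<integral>y. ?w y * (exp (v \<bullet> y) - 1 - v \<bullet> y) \<partial>lborel\<bar>
      \<le> (\<integral>y. (norm v)\<^sup>2 * (?w y * (4 * exp (2 * norm y))) \<partial>lborel)"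
    by (intro order_trans[OF integral_abs_bound] integral_mono int_bound)
      (auto intro: integrable_abs int_rem)
  then show ?thesis by (simp add: eq)
qed

lemma has_derivative_laplace: "(laplace has_derivative (\<lambda>v. v \<bullet> laplace_moment a)) (at a)"
  unfolding has_derivative_at_alt
proof (intro conjI allI impI)
  show "bounded_linear (\<lambda>v. v \<bullet> laplace_moment a)" by (rule bounded_linear_inner_left)
  fix e :: real assume e: "e > 0"
  define M where "M = (\<integral>y. g y * exp (a \<bullet> y) * (4 * exp (2 * norm y)) \<partial>lborel)"
  have M: "M \<ge> 0" unfolding M_def using pos by (intro integral_nonneg_AE AE_I2) (simp add: less_imp_le)
  define d where "d = min 1 (e / (M + 1))"
  have "d > 0" using e M by (simp add: d_def)
  moreover have "\<bar>laplace z - laplace a - (z - a) \<bullet> laplace_moment a\<bar> \<le> e * norm (z - a)"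
    if z: "norm (z - a) < d" for z
  proof -
    have "\<bar>laplace z - laplace a - (z - a) \<bullet> laplace_moment a\<bar> \<le> norm (z - a) * (norm (z - a) * M)"
      using laplace_taylor_le[of "z - a" a] z by (simp add: M_def d_def power2_eq_square mult.assoc)
    also have "\<dots> \<le> norm (z - a) * (e / (M + 1) * M)"
      using z M by (intro mult_left_mono mult_right_mono) (auto simp: d_def)
    also have "\<dots> \<le> norm (z - a) * e"
      using M e by (intro mult_left_mono) (auto simp: field_simps)
    finally show ?thesis by (simp add: mult.commute)
  qed
  ultimately show "\<exists>d>0. \<forall>z. norm (z - a) < d \<longrightarrow>
      norm (laplace z - laplace a - (z - a) \<bullet> laplace_moment a) \<le> e * norm (z - a)"
    by auto
qed

definition log_laplace_gradient :: "'a \<Rightarrow> 'a" where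
  "log_laplace_gradient w = laplace_moment w /\<^sub>R laplace w"

lemma has_derivative_ln_laplace:
  "((\<lambda>w. ln (laplace w)) has_derivative (\<lambda>v. v \<bullet> log_laplace_gradient a)) (at a)"
  using DERIV_compose_FDERIV[OF DERIV_ln[OF laplace_pos] has_derivative_laplace]
  by (simp add: log_laplace_gradient_def divide_inverse mult.commute)

text \<open>Jensen's inequality for the tilted density \<open>g y * exp (a \<bullet> y)\<close>, via \<open>exp s \<ge> 1 + s\<close>.\<close>
lemma ln_laplace_ge_tangent:
  "ln (laplace a) + (b - a) \<bullet> log_laplace_gradient a \<le> ln (laplace b)"
proof -
  define c where "c = (b - a) \<bullet> log_laplace_gradient a"
  let ?w = "\<lambda>y. g y * exp (a \<bullet> y)"
  have Ja: "laplace a > 0" by (rule laplace_pos)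
  have pointwise: "exp c * (?w y + ?w y * ((b - a) \<bullet> y) - c * ?w y) \<le> g y * exp (b \<bullet> y)" for y
  proof -
    have "exp c * (1 + ((b - a) \<bullet> y - c)) \<le> exp c * exp ((b - a) \<bullet> y - c)"
      by (intro mult_left_mono exp_ge_add_one_self) auto
    also have "\<dots> = exp (b \<bullet> y) / exp (a \<bullet> y)"
      by (simp add: exp_diff inner_diff_left)
    finally have "?w y * (exp c * (1 + ((b - a) \<bullet> y - c))) \<le> ?w y * (exp (b \<bullet> y) / exp (a \<bullet> y))"
      using pos[of y] by (intro mult_left_mono) auto
    thus ?thesis by (simp add: algebra_simps)
  qed
  have "exp c * (laplace a + (b - a) \<bullet> laplace_moment a - c * laplace a)
      = (\<integral>y. exp c * (?w y + ?w y * ((b - a) \<bullet> y) - c * ?w y) \<partial>lborel)"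
    using integrable_exp_inner integrable_inner_moment
    by (simp add: laplace_def integral_inner_moment[symmetric])
  also have "\<dots> \<le> laplace b"
    unfolding laplace_def using pointwise integrable_exp_inner integrable_inner_moment
    by (intro integral_mono) (auto intro!: integrable_mult_right Bochner_Integration.integrable_diff
        Bochner_Integration.integrable_add)
  moreover have "laplace a + (b - a) \<bullet> laplace_moment a - c * laplace a = laplace a"
    using Ja by (simp add: c_def log_laplace_gradient_def)
  ultimately have "exp c * laplace a \<le> laplace b" by simp
  hence "ln (exp c * laplace a) \<le> ln (laplace b)"
    using Ja by (subst ln_le_cancel_iff) (auto intro: laplace_pos)
  thus ?thesis using Ja by (simp add: ln_mult c_def)
qed

lemma log_laplace_gradient_monotone:
  "0 \<le> (b - a) \<bullet> (log_laplace_gradient b - log_laplace_gradient a)"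
  using ln_laplace_ge_tangent[of a b] ln_laplace_ge_tangent[of b a]
  by (simp add: inner_diff_right inner_diff_left inner_commute)

end

lemma gaussian_kernel_split:
  fixes x y :: "'a::euclidean_space"
  assumes "T > 0"
  shows "exp (- (norm (y - x))\<^sup>2 / (2 * T))
    = exp (- (norm y)\<^sup>2 / (2 * T)) * exp ((x /\<^sub>R T) \<bullet> y) * exp (- (norm x)\<^sup>2 / (2 * T))"
proof -
  have norm_diff: "(norm (y - x))\<^sup>2 = (norm y)\<^sup>2 - 2 * (x \<bullet> y) + (norm x)\<^sup>2"
    by (simp add: power2_norm_eq_inner inner_diff_left inner_diff_right inner_commute)
  have "- (norm (y - x))\<^sup>2 / (2 * T)
      = - (norm y)\<^sup>2 / (2 * T) + (x /\<^sub>R T) \<bullet> y + - (norm x)\<^sup>2 / (2 * T)"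
    unfolding norm_diff using assms by (simp add: field_simps)
  then show ?thesis by (simp only: exp_add)
qed

lemma laplace_transform_gaussian_weight:
  fixes f :: "'a::euclidean_space \<Rightarrow> real"
  assumes T: "T > 0" and f_pos: "\<And>y. f y > 0"
    and f_int: "\<And>x. integrable lborel (\<lambda>y. f y * exp (- (norm (y - x))\<^sup>2 / (2 * T)))"
  shows "laplace_transform (\<lambda>y. f y * exp (- (norm y)\<^sup>2 / (2 * T)))"
proof
  show "(\<lambda>y. f y * exp (- (norm y)\<^sup>2 / (2 * T))) \<in> borel_measurable lborel"
    using borel_measurable_integrable[OF f_int[of 0]] by simp
  show "f y * exp (- (norm y)\<^sup>2 / (2 * T)) > 0" for y
    using f_pos[of y] by simp
  fix w :: 'a
  define x where "x = T *\<^sub>R w"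
  have eq: "(\<lambda>y. exp ((norm x)\<^sup>2 / (2 * T)) * (f y * exp (- (norm (y - x))\<^sup>2 / (2 * T))))
      = (\<lambda>y. f y * exp (- (norm y)\<^sup>2 / (2 * T)) * exp (w \<bullet> y))"
  proof
    fix y :: 'a
    have "exp ((norm x)\<^sup>2 / (2 * T)) * exp (- (norm x)\<^sup>2 / (2 * T)) = 1"
      by (simp add: exp_add[symmetric])
    moreover have "x /\<^sub>R T = w" using T by (simp add: x_def)
    ultimately show "exp ((norm x)\<^sup>2 / (2 * T)) * (f y * exp (- (norm (y - x))\<^sup>2 / (2 * T)))
        = f y * exp (- (norm y)\<^sup>2 / (2 * T)) * exp (w \<bullet> y)"
      unfolding gaussian_kernel_split[OF T] by (simp add: algebra_simps)
  qed
  show "integrable lborel (\<lambda>y. f y * exp (- (norm y)\<^sup>2 / (2 * T)) * exp (w \<bullet> y))"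
    using integrable_mult_right[OF f_int[of x], of "exp ((norm x)\<^sup>2 / (2 * T))"] unfolding eq .
qed

lemma ln_heat_semiconvex:
  fixes f :: "'a::euclidean_space \<Rightarrow> real"
  assumes T: "T > 0" and f_pos: "\<And>y. f y > 0"
    and f_int: "\<And>x. integrable lborel (\<lambda>y. f y * exp (- (norm (y - x))\<^sup>2 / (2 * T)))"
  obtains D where "\<And>x. ((\<lambda>x. ln (heat T f x)) has_derivative D x) (at x)"
    and "\<And>x z. - (norm (x - z))\<^sup>2 / T \<le> D x (x - z) - D z (x - z)"
proof -
  interpret laplace_transform "\<lambda>y. f y * exp (- (norm y)\<^sup>2 / (2 * T))"
    by (rule laplace_transform_gaussian_weight[OF T f_pos f_int])
  define c where "c = (2 * pi * T) powr (- (real DIM('a) / 2))"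
  have c: "c > 0" using T by (simp add: c_def)
  have ln_heat: "(\<lambda>x. ln (heat T f x))
      = (\<lambda>x. ln c + - (1 / (2 * T)) * (x \<bullet> x) + ln (laplace (x /\<^sub>R T)))"
  proof
    fix x :: 'a
    have "(\<lambda>y. f y * exp (- (norm (y - x))\<^sup>2 / (2 * T))) = (\<lambda>y. exp (- (norm x)\<^sup>2 / (2 * T))
        * (f y * exp (- (norm y)\<^sup>2 / (2 * T)) * exp ((x /\<^sub>R T) \<bullet> y)))"
      unfolding gaussian_kernel_split[OF T] by (simp add: fun_eq_iff ac_simps)
    hence "heat T f x = c * exp (- (norm x)\<^sup>2 / (2 * T)) * laplace (x /\<^sub>R T)"
      unfolding heat_def laplace_def c_def by simp
    thus "ln (heat T f x) = ln c + - (1 / (2 * T)) * (x \<bullet> x) + ln (laplace (x /\<^sub>R T))"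
      using c laplace_pos[of "x /\<^sub>R T"] by (simp add: ln_mult power2_norm_eq_inner)
  qed
  define D where "D x v = - (1 / (2 * T)) * (x \<bullet> v + v \<bullet> x)
    + (v /\<^sub>R T) \<bullet> log_laplace_gradient (x /\<^sub>R T)" for x v :: 'a
  show thesis
  proof
    fix x :: 'a
    have "((\<lambda>x. ln (laplace (x /\<^sub>R T))) has_derivative
        (\<lambda>v. (v /\<^sub>R T) \<bullet> log_laplace_gradient (x /\<^sub>R T))) (at x)"
      using diff_chain_at[OF bounded_linear.has_derivative[OF bounded_linear_scaleR_right
          has_derivative_ident] has_derivative_ln_laplace]
      by (simp add: o_def)
    from has_derivative_add[OF has_derivative_add[OF has_derivative_const
        has_derivative_mult_right[OF has_derivative_inner[OF has_derivative_ident has_derivative_ident]]]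
        this]
    show "((\<lambda>x. ln (heat T f x)) has_derivative D x) (at x)"
      unfolding ln_heat by (rule has_derivative_eq_rhs) (simp add: D_def fun_eq_iff)
  next
    fix x z :: 'a
    have "D x (x - z) - D z (x - z) = - (norm (x - z))\<^sup>2 / T
        + (x /\<^sub>R T - z /\<^sub>R T) \<bullet> (log_laplace_gradient (x /\<^sub>R T) - log_laplace_gradient (z /\<^sub>R T))"
      using T by (simp add: D_def power2_norm_eq_inner inner_diff_left inner_diff_right
          inner_commute field_simps)
    with log_laplace_gradient_monotone
    show "- (norm (x - z))\<^sup>2 / T \<le> D x (x - z) - D z (x - z)" by simp
  qed
qed

lemma kappa_add_semiconvex:
  fixes f h :: "'a::euclidean_space \<Rightarrow> real"
  assumes f: "\<And>x. (f has_derivative Df x) (at x)" and h: "\<And>x. (h has_derivative Dh x) (at x)"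
    and semiconvex: "\<And>x z. c * (norm (x - z))\<^sup>2 \<le> Dh x (x - z) - Dh z (x - z)"
    and r: "r > 0"
  shows "kappa f r + ereal c \<le> kappa (\<lambda>x. f x + h x) r"
proof -
  let ?q = "\<lambda>D x z. (D x (x - z) - D z (x - z)) / (norm (x - z))\<^sup>2"
  have fd: "frechet_derivative f (at y) = Df y" for y
    using frechet_derivative_at[OF f] by simp
  have fd_sum: "frechet_derivative (\<lambda>x. f x + h x) (at y) = (\<lambda>v. Df y v + Dh y v)" for y
    using frechet_derivative_at[OF has_derivative_add[OF f h]] by simp
  have "kappa f r + ereal c \<le> ereal (?q (\<lambda>y v. Df y v + Dh y v) x z)"
    if xz: "norm (x - z) = r" for x z
  proof -
    have "kappa f r \<le> ereal (?q Df x z)"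
      unfolding kappa_def using xz by (intro INF_lower2[of "(x, z)"]) (auto simp: fd)
    hence "kappa f r + ereal c \<le> ereal (?q Df x z + c)"
      by (metis add_right_mono plus_ereal.simps(1))
    also have "?q Df x z + c \<le> ?q (\<lambda>y v. Df y v + Dh y v) x z"
    proof -
      have "c \<le> (Dh x (x - z) - Dh z (x - z)) / r\<^sup>2"
        using semiconvex[of x z] xz r by (simp add: pos_le_divide_eq)
      moreover have "?q (\<lambda>y v. Df y v + Dh y v) x z = ?q Df x z + (Dh x (x - z) - Dh z (x - z)) / r\<^sup>2"
        using xz r by (simp add: field_simps)
      ultimately show ?thesis by linarith
    qed
    finally show ?thesis by simp
  qed
  then show ?thesis
    unfolding kappa_def[of "\<lambda>x. f x + h x"] by (intro INF_greatest) (auto simp: fd_sum)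
qed

theorem mainTheorem8:
  fixes U\<mu> U\<nu> \<phi> \<psi> :: "'a::euclidean_space \<Rightarrow> real"
    and \<beta>\<mu> \<alpha>\<nu> L T :: real
  assumes C2_mu: "C2 U\<mu>" and C2_nu: "C2 U\<nu>"
    and prob_mu: "(\<integral>\<^sup>+x. ennreal (exp (- U\<mu> x)) \<partial>lborel) = 1"
    and prob_nu: "(\<integral>\<^sup>+x. ennreal (exp (- U\<nu> x)) \<partial>lborel) = 1"
    and moment_mu: "integrable lborel (\<lambda>x. (norm x)\<^sup>2 * exp (- U\<mu> x))"
    and entropy_mu: "integrable lborel (\<lambda>x. exp (- U\<mu> x) * ln (exp (- U\<mu> x)))"
    and beta_pos: "\<beta>\<mu> > 0"
    and hess_mu: "hessian_upper_bound U\<mu> \<beta>\<mu>"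
    and alpha_pos: "\<alpha>\<nu> > 0" and L_pos: "L > 0"
    and kappa_nu: "\<forall>r>0. ereal (\<alpha>\<nu> - fL L r / r) \<le> kappa U\<nu> r"
    and T_pos: "T > 0"
    and sol: "schroedinger_solution T U\<mu> U\<nu> \<phi> \<psi>"
  shows "(\<forall>x. \<psi> differentiable (at x)) \<and>
         (\<forall>r>0. ereal (\<alpha>\<nu> - 1 / T - fL L r / r) \<le> kappa \<psi> r)"
proof -
  from C2_nu obtain DU where DU: "\<And>x. (U\<nu> has_derivative blinfun_apply (DU x)) (at x)"
    unfolding C2_def by blast
  from sol have psi: "\<psi> = (\<lambda>x. U\<nu> x + ln (heat T (\<lambda>y. exp (- \<phi> y)) x))"
    and int: "\<And>x. integrable lborel (\<lambda>y. exp (- \<phi> y) * exp (- (norm (y - x))\<^sup>2 / (2 * T)))"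
    unfolding schroedinger_solution_def by blast+
  obtain D where D: "\<And>x. ((\<lambda>x. ln (heat T (\<lambda>y. exp (- \<phi> y)) x)) has_derivative D x) (at x)"
    and semiconvex: "\<And>x z. - (norm (x - z))\<^sup>2 / T \<le> D x (x - z) - D z (x - z)"
    by (rule ln_heat_semiconvex[OF T_pos _ int]) (simp, blast)
  have "\<psi> differentiable (at x)" for x
    unfolding psi using has_derivative_add[OF DU D] by (auto simp: differentiable_def)
  moreover have "ereal (\<alpha>\<nu> - 1 / T - fL L r / r) \<le> kappa \<psi> r" if r: "r > 0" for r
  proof -
    have "ereal (\<alpha>\<nu> - 1 / T - fL L r / r) = ereal (\<alpha>\<nu> - fL L r / r) + ereal (- 1 / T)" by simp
    also have "\<dots> \<le> kappa U\<nu> r + ereal (- 1 / T)"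
      using kappa_nu r by (intro add_right_mono) auto
    also have "\<dots> \<le> kappa \<psi> r"
      unfolding psi using semiconvex r by (intro kappa_add_semiconvex[OF DU D]) auto
    finally show ?thesis .
  qed
  ultimately show ?thesis by blast
qed

end
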